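(* Let $(X,d)$ be a metric space, $f:X\to X$ a Borel measurable map and $\mu$ an $f$-invariant (i.e. $\mu=\mu\circ f^{-1}$) Borel probability measure that is an expansive measure of $f$. Then for every $p\in X$, $\mu(W^s(p))=0$, where $W^s(p)=\{x\in X:\lim_{n\to\infty}d(f^n(x),f^n(p))=0\}$.
   Context: A Borel probability measure $\mu$ is an expansive measure of $f$ if there is $\delta>0$ with $\mu(\Phi_\delta(x))=0$ for all $x\in X$, where $\Phi_\delta(x)=\{y\in X: d(f^i(y),f^i(x))\le\delta \text{ for all } i\in\mathbb{N}\}$, $\mathbb{N}=\{0,1,2,\dots\}$. *)

theory Defs
  imports "HOL-Probability.Probability"
begin

definition dyn_ball :: "('a::metric_space \<Rightarrow> 'a) \<Rightarrow> real \<Rightarrow> 'a \<Rightarrow> 'a set" where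
  "dyn_ball f \<delta> x = {y. \<forall>i::nat. dist ((f ^^ i) y) ((f ^^ i) x) \<le> \<delta>}"

definition expansive_measure :: "'a measure \<Rightarrow> ('a::metric_space \<Rightarrow> 'a) \<Rightarrow> bool" where
  "expansive_measure M f \<longleftrightarrow> (\<exists>\<delta>>0. \<forall>x. emeasure M (dyn_ball f \<delta> x) = 0)"

definition stable_set :: "('a::metric_space \<Rightarrow> 'a) \<Rightarrow> 'a \<Rightarrow> 'a set" where
  "stable_set f p = {x. (\<lambda>n. dist ((f ^^ n) x) ((f ^^ n) p)) \<longlonglongrightarrow> 0}"

end

theory Submission
  imports Defs
begin

text \<open>Since \<mu> is invariant, every set \<open>f\<^sup>-\<^sup>N (\<Phi>\<^sub>\<delta>(f\<^sup>N p))\<close> is \<mu>-null by expansivity.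
  A point of \<open>W\<^sup>s(p)\<close> \<delta>-shadows the orbit of p from some time N on, i.e. lies in
  \<open>f\<^sup>-\<^sup>N (\<Phi>\<^sub>\<delta>(f\<^sup>N p))\<close>; so \<open>W\<^sup>s(p)\<close> is covered by countably many null sets.\<close>

lemma dyn_ball_in_borel:
  fixes f :: "'a::metric_space \<Rightarrow> 'a"
  assumes [measurable]: "f \<in> borel_measurable borel"
  shows "dyn_ball f \<delta> x \<in> sets borel"
proof -
  have [measurable]: "f ^^ i \<in> borel_measurable borel" for i
    by (rule measurable_compose_n[OF assms])
  have [measurable]: "(\<lambda>y. dist y c) \<in> borel_measurable borel" for c :: 'a
    by (intro borel_measurable_continuous_onI continuous_intros)
  have "dyn_ball f \<delta> x = {y \<in> space borel. \<forall>i. dist ((f ^^ i) y) ((f ^^ i) x) \<le> \<delta>}"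
    by (simp add: dyn_ball_def)
  also have "\<dots> \<in> sets borel"
    by measurable
  finally show ?thesis .
qed

lemma distr_funpow_invariant:
  assumes f: "f \<in> measurable M M" and inv: "distr M M f = M"
  shows "distr M M (f ^^ n) = M"
proof (induction n)
  case 0
  then show ?case by (simp add: distr_id2)
next
  case (Suc n)
  have "distr M M (f ^^ Suc n) = distr (distr M M (f ^^ n)) M f"
    using distr_distr[OF f measurable_compose_n[OF f]] by simp
  also have "\<dots> = M"
    using Suc inv by simp
  finally show ?case .
qed

lemma emeasure_funpow_vimage_invariant:
  assumes f: "f \<in> measurable M M" and inv: "distr M M f = M" and A: "A \<in> sets M"
  shows "emeasure M ((f ^^ n) -` A \<inter> space M) = emeasure M A"
proof -
  have "emeasure M ((f ^^ n) -` A \<inter> space M) = emeasure (distr M M (f ^^ n)) A"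
    using emeasure_distr[OF measurable_compose_n[OF f] A] by simp
  then show ?thesis
    using distr_funpow_invariant[OF f inv] by simp
qed

lemma stable_set_subset_vimage_dyn_ball:
  assumes "\<delta> > 0"
  shows "stable_set f p \<subseteq> (\<Union>N. (f ^^ N) -` dyn_ball f \<delta> ((f ^^ N) p))"
proof
  fix x
  assume "x \<in> stable_set f p"
  then have "eventually (\<lambda>n. dist ((f ^^ n) x) ((f ^^ n) p) < \<delta>) sequentially"
    using assms unfolding stable_set_def by (simp add: order_tendstoD(2))
  then obtain N where N: "\<And>n. n \<ge> N \<Longrightarrow> dist ((f ^^ n) x) ((f ^^ n) p) < \<delta>"
    unfolding eventually_sequentially by blast
  have "dist ((f ^^ i) ((f ^^ N) x)) ((f ^^ i) ((f ^^ N) p)) \<le> \<delta>" for i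
    using N[of "i + N"] by (simp add: funpow_add)
  then have "x \<in> (f ^^ N) -` dyn_ball f \<delta> ((f ^^ N) p)"
    by (simp add: dyn_ball_def)
  then show "x \<in> (\<Union>N. (f ^^ N) -` dyn_ball f \<delta> ((f ^^ N) p))"
    by blast
qed

theorem proposition3p2:
  fixes M :: "'a::metric_space measure" and f :: "'a \<Rightarrow> 'a"
  assumes "prob_space M"
    and "sets M = sets borel"
    and "f \<in> borel_measurable borel"
    and "distr M M f = M"
    and "expansive_measure M f"
  shows "\<forall>p. emeasure M (stable_set f p) = 0"
proof
  fix p
  obtain \<delta> where \<delta>: "\<delta> > 0" "\<And>x. emeasure M (dyn_ball f \<delta> x) = 0"
    using assms(5) unfolding expansive_measure_def by blast
  have space: "space M = UNIV"
    using sets_eq_imp_space_eq[OF assms(2)] by simp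
  have f: "f \<in> measurable M M"
    using assms(3) measurable_cong_sets[OF assms(2) assms(2)] by simp
  have balls: "dyn_ball f \<delta> x \<in> sets M" for x
    using dyn_ball_in_borel[OF assms(3)] assms(2) by simp
  have "(f ^^ N) -` dyn_ball f \<delta> ((f ^^ N) p) \<in> null_sets M" for N
    using emeasure_funpow_vimage_invariant[OF f assms(4) balls] \<delta>(2)
      measurable_sets[OF measurable_compose_n[OF f] balls] space
    by (simp add: null_sets_def)
  then have cover_null: "(\<Union>N. (f ^^ N) -` dyn_ball f \<delta> ((f ^^ N) p)) \<in> null_sets M"
    by (rule null_sets_UN)
  show "emeasure M (stable_set f p) = 0"
  proof (cases "stable_set f p \<in> sets M")
    case True
    show ?thesis
      by (rule null_setsD1[OF null_sets_subset[OF cover_null True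
            stable_set_subset_vimage_dyn_ball[OF \<delta>(1)]]])
  next
    case False
    \<comment> \<open>junk value: \<open>emeasure\<close> is 0 outside \<open>sets M\<close>\<close>
    then show ?thesis by (simp add: emeasure_notin_sets)
  qed
qed

end
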